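(* The set of $r\in Q_0$ for which $\lim_{n\to\infty}\frac{\tau(x^nr)}{n}=2$ has $\mu_0$-measure $1$.
   Context: $\mathbb{F}_2((x^{-1}))$ is the field of formal series $r=\sum_{z\in\mathbb{Z}}a_zx^z$, $a_z\in\mathbb{F}_2$, with $a_z\neq0$ for only finitely many positive $z$; $\deg(r)=\max\{z:a_z\ne0\}$; the polynomial part is $[r]=\sum_{z\ge0}a_zx^z$. Define $S(r)=\frac{r}{x+1}$ if $[r](1)=0$ and $S(r)=\frac{xr}{x+1}$ if $[r](1)=1$. For $r$ with $\deg(r)\ge0$, $\tau(r)$ is the least $k\in\mathbb{N}$ with $[S^k(r)]=1$ (finite). $Q_0=\{r:\deg(r)=0\}$, and $\mu_0$ is the probability measure on $Q_0$ under which the coefficients $a_{-1},a_{-2},\dots$ are independent and uniform in $\mathbb{F}_2$. *)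

theory Defs
  imports "HOL-Probability.Probability"
begin

text \<open>Elements of F_2((x^-1)) are represented by their coefficient functions
  a :: int => bool (a z = True iff the coefficient of x^z is 1).\<close>

type_synonym f2laurent = "int \<Rightarrow> bool"

definition is_f2laurent :: "f2laurent \<Rightarrow> bool" where
  "is_f2laurent a \<longleftrightarrow> finite {z. 0 < z \<and> a z}"

definition xpow_mult :: "nat \<Rightarrow> f2laurent \<Rightarrow> f2laurent" where
  "xpow_mult n a = (\<lambda>z. a (z - int n))"

text \<open>[r](1): the polynomial part evaluated at 1, i.e. the parity of the number of
  nonzero coefficients at nonnegative exponents.\<close>
definition polypart_at_1 :: "f2laurent \<Rightarrow> bool" where
  "polypart_at_1 a \<longleftrightarrow> odd (card {z. 0 \<le> z \<and> a z})"

text \<open>Division by (x+1): since 1/(x+1) = sum_{k>=1} x^(-k), the coefficient of x^z in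
  r/(x+1) is sum_{k>=1} a_(z+k) over F_2.\<close>
definition div_x_plus_1 :: "f2laurent \<Rightarrow> f2laurent" where
  "div_x_plus_1 a = (\<lambda>z. odd (card {k::int. 1 \<le> k \<and> a (z + k)}))"

definition S_map :: "f2laurent \<Rightarrow> f2laurent" where
  "S_map a = (if polypart_at_1 a then div_x_plus_1 (xpow_mult 1 a) else div_x_plus_1 a)"

definition polypart_is_1 :: "f2laurent \<Rightarrow> bool" where
  "polypart_is_1 a \<longleftrightarrow> (\<forall>z\<ge>0. a z = (z = 0))"

definition tau :: "f2laurent \<Rightarrow> nat" where
  "tau a = (LEAST k. polypart_is_1 ((S_map ^^ k) a))"

text \<open>Q_0 is parametrised by the coefficients a_{-1}, a_{-2}, ...: omega k = a_{-(k+1)}.\<close>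
definition Q0_elem :: "(nat \<Rightarrow> bool) \<Rightarrow> f2laurent" where
  "Q0_elem \<omega> = (\<lambda>z. z = 0 \<or> (z < 0 \<and> \<omega> (nat (- z) - 1)))"

definition mu0 :: "(nat \<Rightarrow> bool) measure" where
  "mu0 = PiM UNIV (\<lambda>_. measure_pmf (pmf_of_set (UNIV :: bool set)))"

end

theory Submission
  imports Defs
begin

text \<open>Write \<open>r = Q0_elem \<omega>\<close>. By induction, \<open>S^k (x^n r) = x^(k + h\<^sub>k) r / (x + 1)^k\<close>, where the
  height \<open>h\<^sub>k\<close> starts at \<open>n\<close> and at each step either stays or drops by one, according to
  a parity of coefficients of \<open>r / (x + 1)^(k+1)\<close>; so \<open>\<tau>(x^n r)\<close> is the time at which
  the height reaches \<open>0\<close>. The first \<open>n\<close> stay/drop decisions are a bijective image of the first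
  \<open>n\<close> coefficients of \<open>r\<close>, hence the height after \<open>n\<close> steps is \<open>Binomial(n, 1/2)\<close>;
  afterwards the walk is the same walk for \<open>r / (x + 1)^n\<close>, which is again uniformly
  distributed. Thus each round halves the height up to Hoeffding errors, and
  \<open>\<tau>(x^n r) \<approx> n (1 + 1/2 + 1/4 + \<dots>) = 2n\<close>. Rounds are iterated down to a cutoff \<open>L\<close>, below
  which the height is absorbed deterministically in \<open>O(L\<^sup>2)\<close> steps since the triangle of
  coefficients is periodic in \<open>k\<close> with period \<open>2^M\<close> on columns below \<open>2^M\<close>. Borel--Cantelli
  along \<open>n = k^6\<close> with \<open>L = k^2\<close>, and monotonicity of \<open>\<tau>(x^n r)\<close> in \<open>n\<close>, give the limit.\<close>

section \<open>The coefficient triangle and the walk\<close>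

text \<open>\<open>qcoeff \<omega> k i\<close> is the coefficient of \<open>x^(-k-i)\<close> in \<open>Q0_elem \<omega> / (x + 1)^k\<close>
  (\<open>div_x_plus_1_pow_Q0_elem\<close>): dividing by \<open>x + 1\<close> replaces a row by its prefix parities.\<close>
fun qcoeff :: "(nat \<Rightarrow> bool) \<Rightarrow> nat \<Rightarrow> nat \<Rightarrow> bool" where
  "qcoeff \<omega> 0 i = (i = 0 \<or> \<omega> (i - 1))"
| "qcoeff \<omega> (Suc k) 0 = True"
| "qcoeff \<omega> (Suc k) (Suc i) = (qcoeff \<omega> (Suc k) i \<noteq> qcoeff \<omega> k (Suc i))"

lemma qcoeff_0_right [simp]: "qcoeff \<omega> k 0"
  by (cases k) auto

text \<open>\<open>S^k (x^h r) = x^(k + walk \<omega> h k) r / (x + 1)^k\<close> (\<open>S_map_pow_xpow_Q0_elem\<close>):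
  the height \<open>walk \<omega> h k\<close> stays when \<open>S\<close> multiplies by \<open>x / (x + 1)\<close> and drops by one
  when it divides by \<open>x + 1\<close>.\<close>
fun walk :: "(nat \<Rightarrow> bool) \<Rightarrow> nat \<Rightarrow> nat \<Rightarrow> nat" where
  "walk \<omega> h 0 = h"
| "walk \<omega> h (Suc k) =
     (if qcoeff \<omega> (Suc k) (walk \<omega> h k) then walk \<omega> h k else walk \<omega> h k - 1)"

lemma walk_antimono: "k \<le> k' \<Longrightarrow> walk \<omega> h k' \<le> walk \<omega> h k"
proof (induction k' rule: dec_induct)
  case (step m)
  then show ?case by auto
qed simp

lemma walk_le_start: "walk \<omega> h k \<le> h"
  using walk_antimono[of 0 k] by simp

lemma walk_ge: "h - k \<le> walk \<omega> h k"
  by (induction k) auto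

lemma walk_eq_0_mono: "walk \<omega> h k = 0 \<Longrightarrow> k \<le> k' \<Longrightarrow> walk \<omega> h k' = 0"
  using walk_antimono[of k k' \<omega> h] by simp

lemma walk_mono_start: "h \<le> h' \<Longrightarrow> walk \<omega> h k \<le> walk \<omega> h' k"
proof (induction k)
  case (Suc k)
  show ?case
  proof (cases "walk \<omega> h k = walk \<omega> h' k")
    case False
    with Suc have "walk \<omega> h k < walk \<omega> h' k" by simp
    then show ?thesis by auto
  qed simp
qed simp

text \<open>Row \<open>k\<close> of the triangle, read as the coefficients of \<open>r / (x + 1)^k \<in> Q\<^sub>0\<close>.\<close>
definition quot_seq :: "nat \<Rightarrow> (nat \<Rightarrow> bool) \<Rightarrow> nat \<Rightarrow> bool" where
  "quot_seq k \<omega> = (\<lambda>i. qcoeff \<omega> k (Suc i))"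

definition hitting_time :: "(nat \<Rightarrow> bool) \<Rightarrow> nat \<Rightarrow> nat" where
  "hitting_time \<omega> h = (LEAST k. walk \<omega> h k = 0)"

lemma qcoeff_quot_seq: "qcoeff (quot_seq k0 \<omega>) k i = qcoeff \<omega> (k0 + k) i"
proof (induction k arbitrary: i)
  case 0 then show ?case by (cases i) (auto simp: quot_seq_def)
next
  case (Suc k) then show ?case by (induction i) auto
qed

lemma walk_add: "walk \<omega> h (k0 + k) = walk (quot_seq k0 \<omega>) (walk \<omega> h k0) k"
  by (induction k) (auto simp: qcoeff_quot_seq)

lemma qcoeff_cong_prefix:
  "(\<And>j. j < m \<Longrightarrow> \<omega> j = \<omega>' j) \<Longrightarrow> i \<le> m \<Longrightarrow> qcoeff \<omega> k i = qcoeff \<omega>' k i"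
proof (induction k arbitrary: i)
  case 0 then show ?case by (cases i) auto
next
  case (Suc k) then show ?case by (induction i) auto
qed

lemma walk_cong_prefix:
  "(\<And>j. j < h \<Longrightarrow> \<omega> j = \<omega>' j) \<Longrightarrow> walk \<omega> h k = walk \<omega>' h k"
proof (induction k)
  case (Suc k)
  have "qcoeff \<omega> (Suc k) (walk \<omega> h k) = qcoeff \<omega>' (Suc k) (walk \<omega> h k)"
    by (rule qcoeff_cong_prefix[of h]) (use Suc walk_le_start in auto)
  then show ?case using Suc by simp
qed simp

section \<open>The orbit of \<open>x\<^sup>n r\<close> under \<open>S\<close>\<close>

lemma div_x_plus_1_xpow_mult: "div_x_plus_1 (xpow_mult m a) = xpow_mult m (div_x_plus_1 a)"
  unfolding div_x_plus_1_def xpow_mult_def by (simp add: algebra_simps)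

lemma xpow_mult_xpow_mult: "xpow_mult m (xpow_mult n a) = xpow_mult (m + n) a"
  unfolding xpow_mult_def by (simp add: algebra_simps)

lemma qcoeff_Suc_eq_odd_card: "qcoeff \<omega> (Suc k) i = odd (card {l. l \<le> i \<and> qcoeff \<omega> k l})"
proof (induction i)
  case 0
  have "{l. l \<le> 0 \<and> qcoeff \<omega> k l} = {0}" by auto
  then show ?case by simp
next
  case (Suc i)
  have "{l. l \<le> Suc i \<and> qcoeff \<omega> k l} =
      (if qcoeff \<omega> k (Suc i) then insert (Suc i) else id) {l. l \<le> i \<and> qcoeff \<omega> k l}"
    by (auto simp: le_Suc_eq)
  then show ?case using Suc by simp
qed

lemma card_reflected_int_interval:
  "card {z::int. a \<le> z \<and> z \<le> a + int i \<and> P (nat (a + int i - z))} = card {l. l \<le> i \<and> P l}"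
proof -
  have "{z::int. a \<le> z \<and> z \<le> a + int i \<and> P (nat (a + int i - z))} =
      (\<lambda>l. a + int i - int l) ` {l. l \<le> i \<and> P l}"
  proof (intro set_eqI iffI)
    fix z assume "z \<in> {z::int. a \<le> z \<and> z \<le> a + int i \<and> P (nat (a + int i - z))}"
    then have z: "a \<le> z" "z \<le> a + int i" "P (nat (a + int i - z))" by auto
    then have "z = a + int i - int (nat (a + int i - z))" "nat (a + int i - z) \<le> i" by auto
    with z show "z \<in> (\<lambda>l. a + int i - int l) ` {l. l \<le> i \<and> P l}" by blast
  qed auto
  moreover have "inj_on (\<lambda>l. a + int i - int l) {l. l \<le> i \<and> P l}" by (auto simp: inj_on_def)
  ultimately show ?thesis by (simp add: card_image)
qed

lemma div_x_plus_1_pow_Q0_elem: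
  "(div_x_plus_1 ^^ k) (Q0_elem \<omega>) z = (z \<le> - int k \<and> qcoeff \<omega> k (nat (- z - int k)))"
proof (induction k arbitrary: z)
  case 0
  show ?case unfolding Q0_elem_def by (cases "z < 0") (auto simp: nat_eq_iff)
next
  case (Suc k)
  have e: "(div_x_plus_1 ^^ Suc k) (Q0_elem \<omega>) z =
      odd (card {j. 1 \<le> j \<and> z + j \<le> - int k \<and> qcoeff \<omega> k (nat (- (z + j) - int k))})"
    by (simp add: div_x_plus_1_def[of "(div_x_plus_1 ^^ k) (Q0_elem \<omega>)"] Suc.IH)
  show ?case
  proof (cases "z \<le> - int (Suc k)")
    case False
    then have empty: "{j. 1 \<le> j \<and> z + j \<le> - int k \<and> qcoeff \<omega> k (nat (- (z + j) - int k))} = {}"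
      by auto
    show ?thesis using False unfolding e empty by simp
  next
    case True
    define i where "i = nat (- z - int (Suc k))"
    have zi: "- z - int k = 1 + int i" using True unfolding i_def by simp
    have "{j. 1 \<le> j \<and> z + j \<le> - int k \<and> qcoeff \<omega> k (nat (- (z + j) - int k))}
        = {j::int. 1 \<le> j \<and> j \<le> 1 + int i \<and> qcoeff \<omega> k (nat (1 + int i - j))}"
      using zi by (intro Collect_cong) (auto simp: algebra_simps)
    then have "(div_x_plus_1 ^^ Suc k) (Q0_elem \<omega>) z = qcoeff \<omega> (Suc k) i"
      using e by (simp add: card_reflected_int_interval qcoeff_Suc_eq_odd_card)
    then show ?thesis using True unfolding i_def by simp
  qed
qed

lemma polypart_at_1_xpow_div_x_plus_1_pow:
  assumes "k \<le> D"
  shows "polypart_at_1 (xpow_mult D ((div_x_plus_1 ^^ k) (Q0_elem \<omega>))) = qcoeff \<omega> (Suc k) (D - k)"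
proof -
  have "{z. 0 \<le> z \<and> xpow_mult D ((div_x_plus_1 ^^ k) (Q0_elem \<omega>)) z} =
      {z::int. 0 \<le> z \<and> z \<le> int (D - k) \<and> qcoeff \<omega> k (nat (int (D - k) - z))}"
    using assms
    by (auto simp: xpow_mult_def div_x_plus_1_pow_Q0_elem algebra_simps of_nat_diff)
  then show ?thesis
    using card_reflected_int_interval[of 0 "D - k" "qcoeff \<omega> k"]
    by (simp add: polypart_at_1_def qcoeff_Suc_eq_odd_card)
qed

lemma polypart_is_1_xpow_div_x_plus_1_pow:
  assumes "k \<le> D"
  shows "polypart_is_1 (xpow_mult D ((div_x_plus_1 ^^ k) (Q0_elem \<omega>))) \<longleftrightarrow> D = k"
proof
  assume "polypart_is_1 (xpow_mult D ((div_x_plus_1 ^^ k) (Q0_elem \<omega>)))"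
  then have "xpow_mult D ((div_x_plus_1 ^^ k) (Q0_elem \<omega>)) (int D - int k) = (D = k)"
    using assms unfolding polypart_is_1_def by auto
  then show "D = k" by (simp add: xpow_mult_def div_x_plus_1_pow_Q0_elem)
next
  assume "D = k"
  then show "polypart_is_1 (xpow_mult D ((div_x_plus_1 ^^ k) (Q0_elem \<omega>)))"
    unfolding polypart_is_1_def by (auto simp: xpow_mult_def div_x_plus_1_pow_Q0_elem)
qed

lemma S_map_pow_xpow_Q0_elem:
  "(S_map ^^ k) (xpow_mult h (Q0_elem \<omega>)) =
     xpow_mult (k + walk \<omega> h k) ((div_x_plus_1 ^^ k) (Q0_elem \<omega>))"
proof (induction k)
  case (Suc k)
  define w where "w = walk \<omega> h k"
  have "(S_map ^^ Suc k) (xpow_mult h (Q0_elem \<omega>)) =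
      S_map (xpow_mult (k + w) ((div_x_plus_1 ^^ k) (Q0_elem \<omega>)))"
    using Suc w_def by simp
  also have "\<dots> = xpow_mult (k + w + (if qcoeff \<omega> (Suc k) w then 1 else 0))
      ((div_x_plus_1 ^^ Suc k) (Q0_elem \<omega>))"
    using polypart_at_1_xpow_div_x_plus_1_pow[of k "k + w" \<omega>]
    by (simp add: S_map_def xpow_mult_xpow_mult div_x_plus_1_xpow_mult)
  finally have "(S_map ^^ Suc k) (xpow_mult h (Q0_elem \<omega>)) = xpow_mult
      (k + w + (if qcoeff \<omega> (Suc k) w then 1 else 0)) ((div_x_plus_1 ^^ Suc k) (Q0_elem \<omega>))" .
  moreover have "k + w + (if qcoeff \<omega> (Suc k) w then 1 else 0) = Suc k + walk \<omega> h (Suc k)"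
    using qcoeff_0_right[of \<omega> "Suc k"] by (cases "w = 0") (auto simp: w_def)
  ultimately show ?case by simp
qed simp

lemma tau_xpow_Q0_elem: "tau (xpow_mult h (Q0_elem \<omega>)) = hitting_time \<omega> h"
  unfolding tau_def hitting_time_def S_map_pow_xpow_Q0_elem
  by (subst polypart_is_1_xpow_div_x_plus_1_pow) simp_all

section \<open>Periodicity and absorption from small heights\<close>

text \<open>Over \<open>\<bbbF>\<^sub>2\<close>, \<open>(x + 1)^(2^M) = x^(2^M) + 1\<close>: multiplying the quotient of row \<open>k + 2^M\<close>
  by it gives back row \<open>k\<close>.\<close>
lemma qcoeff_add_pow2:
  "qcoeff \<omega> (k + 2^M) i = (qcoeff \<omega> k i \<noteq> (2^M \<le> i \<and> qcoeff \<omega> (k + 2^M) (i - 2^M)))"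
proof (induction M arbitrary: k i)
  case 0
  then show ?case by (cases i) auto
next
  case (Suc M)
  define N :: nat where "N = 2^M"
  have N2: "(2::nat)^Suc M = N + N" unfolding N_def by simp
  have A: "qcoeff \<omega> (k + N + N) j = (qcoeff \<omega> (k + N) j \<noteq> (N \<le> j \<and> qcoeff \<omega> (k + N + N) (j - N)))" for j
    using Suc.IH[of "k + N" j] unfolding N_def by simp
  have B: "qcoeff \<omega> (k + N) j = (qcoeff \<omega> k j \<noteq> (N \<le> j \<and> qcoeff \<omega> (k + N) (j - N)))" for j
    using Suc.IH[of k j] unfolding N_def by simp
  have "qcoeff \<omega> (k + N + N) i = (qcoeff \<omega> k i \<noteq> (N + N \<le> i \<and> qcoeff \<omega> (k + N + N) (i - (N + N))))"
  proof (cases "i < N")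
    case True
    then show ?thesis using A[of i] B[of i] by auto
  next
    case False
    show ?thesis
    proof (cases "i < N + N")
      case True
      have "qcoeff \<omega> (k + N + N) (i - N) = qcoeff \<omega> (k + N) (i - N)"
        using A[of "i - N"] True by auto
      then show ?thesis using A[of i] B[of i] True False by auto
    next
      case False2: False
      have "qcoeff \<omega> (k + N + N) (i - N) = (qcoeff \<omega> (k + N) (i - N) \<noteq> qcoeff \<omega> (k + N + N) (i - (N + N)))"
        using A[of "i - N"] False2 by (auto simp: diff_diff_add)
      then show ?thesis using A[of i] B[of i] False False2 by auto
    qed
  qed
  then show ?case using N2 by (simp add: add.assoc)
qed

lemma qcoeff_add_pow2_low: "i < 2^M \<Longrightarrow> qcoeff \<omega> (k + 2^M) i = qcoeff \<omega> k i"
  using qcoeff_add_pow2[of \<omega> k M i] by auto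

lemma qcoeff_add_mult_pow2_low: "i < 2^M \<Longrightarrow> qcoeff \<omega> (k + j * 2^M) i = qcoeff \<omega> k i"
proof (induction j)
  case 0 then show ?case by simp
next
  case (Suc j)
  have "qcoeff \<omega> (k + Suc j * 2^M) i = qcoeff \<omega> (k + j * 2^M + 2^M) i" by (simp add: algebra_simps)
  also have "\<dots> = qcoeff \<omega> (k + j * 2^M) i" using qcoeff_add_pow2_low[OF Suc.prems] .
  finally show ?case using Suc by simp
qed

lemma qcoeff_column_not_eventually_const: "\<not> (\<forall>k\<ge>K. qcoeff \<omega> k (Suc h) = b)"
proof (induction h arbitrary: K b)
  case 0
  show ?case
  proof
    assume H: "\<forall>k\<ge>K. qcoeff \<omega> k (Suc 0) = b"
    have "qcoeff \<omega> (Suc K) (Suc 0) = (qcoeff \<omega> (Suc K) 0 \<noteq> qcoeff \<omega> K (Suc 0))" by simp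
    with H[rule_format, of K] H[rule_format, of "Suc K"] show False by auto
  qed
next
  case (Suc h)
  show ?case
  proof
    assume H: "\<forall>k\<ge>K. qcoeff \<omega> k (Suc (Suc h)) = b"
    have "\<forall>k\<ge>Suc K. qcoeff \<omega> k (Suc h) = False"
    proof (intro allI impI)
      fix k assume "Suc K \<le> k"
      then obtain k' where k': "k = Suc k'" "K \<le> k'" by (cases k) auto
      have "qcoeff \<omega> (Suc k') (Suc (Suc h)) = (qcoeff \<omega> (Suc k') (Suc h) \<noteq> qcoeff \<omega> k' (Suc (Suc h)))" by simp
      with H[rule_format, of k'] H[rule_format, of "Suc k'"] k' show "qcoeff \<omega> k (Suc h) = False" by auto
    qed
    with Suc.IH[of "Suc K" False] show False by blast
  qed
qed

text \<open>Staying at height \<open>c\<close> for a whole period would make column \<open>c\<close> constantly true.\<close>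
lemma walk_drops_within_period:
  assumes c: "walk \<omega> h k0 = c" "1 \<le> c" "c < 2^M"
  shows "walk \<omega> h (k0 + 2^M) < c"
proof (rule ccontr)
  assume "\<not> walk \<omega> h (k0 + 2^M) < c"
  then have ge: "walk \<omega> h (k0 + 2^M) \<ge> c" by simp
  have eq: "walk \<omega> h (k0 + j) = c" if "j \<le> 2^M" for j
    using walk_antimono[of "k0 + j" "k0 + 2^M" \<omega> h] walk_antimono[of k0 "k0 + j" \<omega> h] that ge c
    by auto
  have tr: "qcoeff \<omega> (k0 + 1 + j) c" if "j < 2^M" for j
  proof (rule ccontr)
    assume nv: "\<not> qcoeff \<omega> (k0 + 1 + j) c"
    have "walk \<omega> h (Suc (k0 + j)) = c - 1"
      using eq[of j] that nv by simp
    moreover have "walk \<omega> h (Suc (k0 + j)) = c" using eq[of "Suc j"] that by simp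
    ultimately show False using c by simp
  qed
  have "\<forall>k\<ge>k0 + 1. qcoeff \<omega> k (Suc (c - 1)) = True"
  proof (intro allI impI)
    fix k assume "k0 + 1 \<le> k"
    then obtain j where j: "k = k0 + 1 + j" using le_Suc_ex by blast
    have "j = j mod 2^M + (j div 2^M) * 2^M" using div_mult_mod_eq[of j "2^M"] by linarith
    then have "k = (k0 + 1 + j mod 2^M) + (j div 2^M) * 2^M" using j by linarith
    then have "qcoeff \<omega> k c = qcoeff \<omega> (k0 + 1 + j mod 2^M) c"
      using qcoeff_add_mult_pow2_low[of c M \<omega> "k0 + 1 + j mod 2^M" "j div 2^M"] c by simp
    also have "\<dots> = True" using tr[of "j mod 2^M"] by simp
    finally show "qcoeff \<omega> k (Suc (c - 1)) = True" using c by simp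
  qed
  with qcoeff_column_not_eventually_const show False by blast
qed

lemma walk_reaches_0:
  assumes "c < 2^M" "walk \<omega> h k0 \<le> c"
  shows "walk \<omega> h (k0 + c * 2^M) = 0"
  using assms
proof (induction c arbitrary: k0)
  case 0 then show ?case by simp
next
  case (Suc c)
  show ?case
  proof (cases "walk \<omega> h k0 \<le> c")
    case True
    then have "walk \<omega> h (k0 + c * 2^M) = 0" using Suc by simp
    then show ?thesis by (rule walk_eq_0_mono) simp
  next
    case False
    then have w: "walk \<omega> h k0 = Suc c" using Suc by simp
    then have "walk \<omega> h (k0 + 2^M) < Suc c" using walk_drops_within_period[OF w] Suc by simp
    then have "walk \<omega> h (k0 + 2^M + c * 2^M) = 0" using Suc by simp
    then show ?thesis by (simp add: add.assoc)
  qed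
qed

lemma walk_absorbed: "h < 2^M \<Longrightarrow> walk \<omega> h (h * 2^M) = 0"
  using walk_reaches_0[of h M \<omega> h 0] by simp

section \<open>Counting: the step sequence and the shift\<close>

definition bitvecs :: "nat \<Rightarrow> (nat \<Rightarrow> bool) set" where
  "bitvecs m = {..<m} \<rightarrow>\<^sub>E UNIV"

lemma finite_bitvecs [simp]: "finite (bitvecs m)"
  unfolding bitvecs_def by (intro finite_PiE) auto

lemma card_bitvecs: "card (bitvecs m) = 2 ^ m"
  unfolding bitvecs_def by (subst card_PiE) auto

lemma bitvecs_eqI:
  "b \<in> bitvecs m \<Longrightarrow> b' \<in> bitvecs m \<Longrightarrow> (\<And>j. j < m \<Longrightarrow> b j = b' j) \<Longrightarrow> b = b'"
  unfolding bitvecs_def by (rule PiE_ext) auto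

lemma card_filter_bij_betw:
  assumes "bij_betw f A A"
  shows "card {x\<in>A. P (f x)} = card {x\<in>A. P x}"
proof -
  have "inj_on f {x\<in>A. P (f x)}"
    using assms unfolding bij_betw_def by (auto intro: inj_on_subset)
  moreover have "f ` {x\<in>A. P (f x)} = {x\<in>A. P x}"
    using assms unfolding bij_betw_def by force
  ultimately show ?thesis by (metis card_image)
qed

lemma bij_betw_bitvecs: "inj_on f (bitvecs m) \<Longrightarrow> (\<And>b. f b \<in> bitvecs m) \<Longrightarrow> bij_betw f (bitvecs m) (bitvecs m)"
  unfolding bij_betw_def by (simp add: endo_inj_surj image_subset_iff)

lemma qcoeff_row_determines_prefix:
  assumes "\<And>i. i \<le> m \<Longrightarrow> qcoeff \<omega> k i = qcoeff \<omega>' k i" and "j < m"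
  shows "\<omega> j = \<omega>' j"
proof -
  have prev_row: "qcoeff \<omega> k i = qcoeff \<omega>' k i"
    if "\<And>i. i \<le> m \<Longrightarrow> qcoeff \<omega> (Suc k) i = qcoeff \<omega>' (Suc k) i" "i \<le> m" for k i
    using that(1)[of "i - 1"] that(1)[of i] that(2) by (cases i) auto
  have "qcoeff \<omega> 0 i = qcoeff \<omega>' 0 i" if "i \<le> m" for i
    using assms(1) that
  proof (induction k arbitrary: i)
    case (Suc k)
    then show ?case using prev_row[of k] by blast
  qed simp
  from this[of "Suc j"] show ?thesis using assms(2) by simp
qed

lemma qcoeff_Suc_neq_iff_tail:
  assumes "\<And>i. N < i \<Longrightarrow> qcoeff \<omega> k i = qcoeff \<omega>' k i" and "N \<le> i"
  shows "qcoeff \<omega> (Suc k) i \<noteq> qcoeff \<omega>' (Suc k) i \<longleftrightarrow> qcoeff \<omega> (Suc k) N \<noteq> qcoeff \<omega>' (Suc k) N"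
  using assms(2)
proof (induction i rule: dec_induct)
  case (step j)
  then show ?case using assms(1)[of "Suc j"] by auto
qed simp

definition steps :: "nat \<Rightarrow> (nat \<Rightarrow> bool) \<Rightarrow> nat \<Rightarrow> bool" where
  "steps n \<omega> = restrict (\<lambda>j. qcoeff \<omega> (Suc j) (walk \<omega> n j)) {..<n}"

lemma steps_in_bitvecs: "steps n \<omega> \<in> bitvecs n"
  unfolding steps_def bitvecs_def by auto

text \<open>Row \<open>k + 1\<close> beyond \<open>n - k - 1\<close> is fixed by row \<open>k\<close> beyond \<open>n - k\<close> together with
  its value at the current height \<open>\<ge> n - k\<close>, which is the \<open>k\<close>-th step.\<close>
lemma steps_determine_walk_and_row_tail:
  assumes "\<omega> \<in> bitvecs n" "\<omega>' \<in> bitvecs n" "steps n \<omega> = steps n \<omega>'" "k \<le> n"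
  shows "(\<forall>i. n - k < i \<longrightarrow> qcoeff \<omega> k i = qcoeff \<omega>' k i) \<and> walk \<omega> n k = walk \<omega>' n k"
  using assms(4)
proof (induction k)
  case 0
  have "\<omega> (i - 1) = \<omega>' (i - 1)" if "n < i" for i
    using assms(1,2) that unfolding bitvecs_def by (auto simp: PiE_def extensional_def)
  then show ?case by simp
next
  case (Suc k)
  then have tail: "\<And>i. n - k < i \<Longrightarrow> qcoeff \<omega> k i = qcoeff \<omega>' k i"
    and walk_eq: "walk \<omega> n k = walk \<omega>' n k" by auto
  define w where "w = walk \<omega> n k"
  have step_eq: "qcoeff \<omega> (Suc k) w = qcoeff \<omega>' (Suc k) w"
    using fun_cong[OF assms(3), of k] Suc.prems walk_eq unfolding steps_def w_def by simp
  moreover have "n - k \<le> w" unfolding w_def by (rule walk_ge)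
  ultimately have "qcoeff \<omega> (Suc k) i = qcoeff \<omega>' (Suc k) i" if "n - k \<le> i" for i
    using qcoeff_Suc_neq_iff_tail[OF tail] that by blast
  moreover have "walk \<omega> n (Suc k) = walk \<omega>' n (Suc k)"
    using step_eq walk_eq unfolding w_def by simp
  ultimately show ?case by auto
qed

lemma inj_on_steps: "inj_on (steps n) (bitvecs n)"
proof (rule inj_onI)
  fix \<omega> \<omega>' assume bv: "\<omega> \<in> bitvecs n" "\<omega>' \<in> bitvecs n" and "steps n \<omega> = steps n \<omega>'"
  then have "qcoeff \<omega> n i = qcoeff \<omega>' n i" for i
    using steps_determine_walk_and_row_tail[of \<omega> n \<omega>' n] by (cases i) auto
  then have "\<omega> j = \<omega>' j" if "j < n" for j
    using qcoeff_row_determines_prefix[of n \<omega> n \<omega>' j] that by blast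
  with bv show "\<omega> = \<omega>'" by (rule bitvecs_eqI)
qed

lemma walk_eq_card_stays:
  "k \<le> n \<Longrightarrow> walk \<omega> n k = n - k + card {j. j < k \<and> qcoeff \<omega> (Suc j) (walk \<omega> n j)}"
proof (induction k)
  case (Suc k)
  have "{j. j < Suc k \<and> qcoeff \<omega> (Suc j) (walk \<omega> n j)} =
      (if qcoeff \<omega> (Suc k) (walk \<omega> n k) then insert k else id) {j. j < k \<and> qcoeff \<omega> (Suc j) (walk \<omega> n j)}"
    by (auto simp: less_Suc_eq)
  then show ?case using Suc by simp
qed simp

lemma card_walk_eq_card_ones:
  "card {\<omega>\<in>bitvecs n. Q (walk \<omega> n n)} = card {b\<in>bitvecs n. Q (card {j\<in>{..<n}. b j})}"
proof -
  have "{j\<in>{..<n}. steps n \<omega> j} = {j. j < n \<and> qcoeff \<omega> (Suc j) (walk \<omega> n j)}" for \<omega>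
    unfolding steps_def by auto
  then have "walk \<omega> n n = card {j\<in>{..<n}. steps n \<omega> j}" for \<omega>
    using walk_eq_card_stays[of n n \<omega>] by simp
  then show ?thesis
    using card_filter_bij_betw[OF bij_betw_bitvecs[OF inj_on_steps steps_in_bitvecs],
        where P = "\<lambda>b. Q (card {j\<in>{..<n}. b j})"] by simp
qed

definition depends_on_prefix :: "nat \<Rightarrow> ((nat \<Rightarrow> bool) \<Rightarrow> 'a) \<Rightarrow> bool" where
  "depends_on_prefix m E \<longleftrightarrow> (\<forall>\<omega> \<omega>'. (\<forall>i<m. \<omega> i = \<omega>' i) \<longrightarrow> E \<omega> = E \<omega>')"

lemma depends_on_prefix_mono: "m \<le> m' \<Longrightarrow> depends_on_prefix m E \<Longrightarrow> depends_on_prefix m' E"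
  unfolding depends_on_prefix_def by auto

lemma depends_on_prefix_disj:
  "depends_on_prefix m A \<Longrightarrow> depends_on_prefix m B \<Longrightarrow> depends_on_prefix m (\<lambda>\<omega>. A \<omega> \<or> B \<omega>)"
  unfolding depends_on_prefix_def by metis

lemma depends_on_prefix_walk: "depends_on_prefix h (\<lambda>\<omega>. P (walk \<omega> h k))"
  unfolding depends_on_prefix_def using walk_cong_prefix by metis

lemma depends_on_prefix_quot_seq:
  assumes "depends_on_prefix m E"
  shows "depends_on_prefix m (\<lambda>\<omega>. E (quot_seq k \<omega>))"
proof -
  have "quot_seq k \<omega> i = quot_seq k \<omega>' i" if "\<forall>j<m. \<omega> j = \<omega>' j" "i < m" for \<omega> \<omega>' i
    unfolding quot_seq_def using that by (intro qcoeff_cong_prefix[of m]) auto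
  then show ?thesis using assms unfolding depends_on_prefix_def by simp
qed

lemma inj_on_restrict_quot_seq: "inj_on (\<lambda>\<omega>. restrict (quot_seq k \<omega>) {..<m}) (bitvecs m)"
proof (rule inj_onI)
  fix \<omega> \<omega>' assume bv: "\<omega> \<in> bitvecs m" "\<omega>' \<in> bitvecs m"
    and eq: "restrict (quot_seq k \<omega>) {..<m} = restrict (quot_seq k \<omega>') {..<m}"
  have "qcoeff \<omega> k i = qcoeff \<omega>' k i" if "i \<le> m" for i
  proof (cases i)
    case (Suc j)
    then have "j < m" using that by simp
    then show ?thesis using fun_cong[OF eq, of j] Suc by (simp add: quot_seq_def)
  qed simp
  then have "\<omega> j = \<omega>' j" if "j < m" for j
    using qcoeff_row_determines_prefix[of m \<omega> k \<omega>' j] that by blast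
  with bv show "\<omega> = \<omega>'" by (rule bitvecs_eqI)
qed

text \<open>Passing to the quotient by \<open>(x + 1)^k\<close> preserves the uniform distribution.\<close>
lemma card_filter_quot_seq:
  assumes "depends_on_prefix m E"
  shows "card {\<omega>\<in>bitvecs m. E (quot_seq k \<omega>)} = card {\<omega>\<in>bitvecs m. E \<omega>}"
proof -
  have "E (quot_seq k \<omega>) = E (restrict (quot_seq k \<omega>) {..<m})" for \<omega>
    using assms unfolding depends_on_prefix_def by auto
  moreover have "restrict (quot_seq k \<omega>) {..<m} \<in> bitvecs m" for \<omega>
    unfolding bitvecs_def by auto
  ultimately show ?thesis
    using card_filter_bij_betw[OF bij_betw_bitvecs[OF inj_on_restrict_quot_seq], where P = E] by simp
qed

section \<open>The measure \<open>\<mu>\<^sub>0\<close> on events depending on finitely many coefficients\<close>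

abbreviation coin :: "bool measure" where
  "coin \<equiv> measure_pmf (pmf_of_set UNIV)"

interpretation coins: product_prob_space "\<lambda>_::nat. coin" UNIV
  by unfold_locales

lemma space_mu0 [simp]: "space mu0 = UNIV"
  unfolding mu0_def by (simp add: space_PiM)

interpretation mu0: prob_space mu0
  unfolding mu0_def by (rule coins.prob_space_axioms)

lemma bitvecs_singleton: "b \<in> bitvecs m \<Longrightarrow> {b} = PiE {..<m} (\<lambda>i. {b i})"
  unfolding bitvecs_def by (intro PiE_singleton[symmetric]) (auto simp: PiE_def)

lemma sets_PiM_subset_bitvecs:
  assumes "X \<subseteq> bitvecs m"
  shows "X \<in> sets (PiM {..<m} (\<lambda>_. coin))"
proof -
  have "finite X" using assms finite_bitvecs finite_subset by blast
  moreover have "{b} \<in> sets (PiM {..<m} (\<lambda>_. coin))" if "b \<in> X" for b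
    using that assms by (auto simp: bitvecs_singleton intro!: sets_PiM_I_finite)
  ultimately have "(\<Union>b\<in>X. {b}) \<in> sets (PiM {..<m} (\<lambda>_. coin))"
    by (intro sets.finite_UN) auto
  then show ?thesis by simp
qed

lemma emeasure_PiM_singleton_bitvecs:
  assumes "b \<in> bitvecs m"
  shows "emeasure (PiM {..<m} (\<lambda>_. coin)) {b} = ennreal ((1/2) ^ m)"
proof -
  have "emeasure (PiM {..<m} (\<lambda>_. coin)) {b} = (\<Prod>i<m. emeasure coin {b i})"
    using assms by (simp add: bitvecs_singleton coins.emeasure_PiM)
  also have "\<dots> = (\<Prod>i<m. ennreal (1/2))"
    by (intro prod.cong refl) (simp add: emeasure_pmf_single)
  also have "\<dots> = ennreal ((1/2) ^ m)"
    by (simp only: prod_constant card_lessThan ennreal_power)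
  finally show ?thesis .
qed

lemma
  assumes "depends_on_prefix m E"
  shows sets_mu0_prefix_event: "{\<omega> \<in> space mu0. E \<omega>} \<in> sets mu0"
    and prob_mu0_prefix_event: "\<P>(\<omega> in mu0. E \<omega>) = card {b \<in> bitvecs m. E b} / 2 ^ m"
proof -
  define X where "X = {b \<in> bitvecs m. E b}"
  have X: "X \<subseteq> bitvecs m" "X \<in> sets (PiM {..<m} (\<lambda>_. coin))"
    using sets_PiM_subset_bitvecs[of X m] unfolding X_def by auto
  have "E (restrict \<omega> {..<m}) = E \<omega>" for \<omega>
    using assms unfolding depends_on_prefix_def by auto
  then have emb: "{\<omega> \<in> space mu0. E \<omega>} = prod_emb UNIV (\<lambda>_. coin) {..<m} X"
    unfolding X_def bitvecs_def prod_emb_def by (auto simp: space_PiM)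
  then show "{\<omega> \<in> space mu0. E \<omega>} \<in> sets mu0"
    unfolding mu0_def using X by (auto intro: measurable_prod_emb)
  have "emeasure mu0 {\<omega> \<in> space mu0. E \<omega>} = emeasure (PiM {..<m} (\<lambda>_. coin)) X"
    unfolding emb unfolding mu0_def using X by (intro coins.emeasure_PiM_emb') auto
  also have "\<dots> = (\<Sum>b\<in>X. emeasure (PiM {..<m} (\<lambda>_. coin)) {b})"
    using X finite_subset[OF X(1)] sets_PiM_subset_bitvecs[of _ m]
    by (intro emeasure_eq_sum_singleton) auto
  also have "\<dots> = (\<Sum>b\<in>X. ennreal ((1/2) ^ m))"
    using X by (intro sum.cong refl emeasure_PiM_singleton_bitvecs) auto
  also have "\<dots> = ennreal (\<Sum>b\<in>X. (1/2) ^ m)"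
    by (rule sum_ennreal) simp
  also have "(\<Sum>b\<in>X. (1/2::real) ^ m) = card X / 2 ^ m"
    by (simp add: power_one_over)
  finally show "\<P>(\<omega> in mu0. E \<omega>) = card {b \<in> bitvecs m. E b} / 2 ^ m"
    unfolding measure_def X_def by simp
qed

lemma prob_mu0_mono:
  assumes "depends_on_prefix m B" "\<And>\<omega>. A \<omega> \<Longrightarrow> B \<omega>"
  shows "\<P>(\<omega> in mu0. A \<omega>) \<le> \<P>(\<omega> in mu0. B \<omega>)"
  using assms sets_mu0_prefix_event[OF assms(1)] by (intro mu0.finite_measure_mono) auto

lemma prob_mu0_disj_le:
  assumes "depends_on_prefix m A" "depends_on_prefix m' B"
  shows "\<P>(\<omega> in mu0. A \<omega> \<or> B \<omega>) \<le> \<P>(\<omega> in mu0. A \<omega>) + \<P>(\<omega> in mu0. B \<omega>)"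
proof -
  have "{\<omega> \<in> space mu0. A \<omega> \<or> B \<omega>} = {\<omega> \<in> space mu0. A \<omega>} \<union> {\<omega> \<in> space mu0. B \<omega>}"
    by auto
  then show ?thesis
    using measure_Un_le[OF sets_mu0_prefix_event[OF assms(1)] sets_mu0_prefix_event[OF assms(2)]]
    by simp
qed

lemma prob_mu0_quot_seq:
  assumes "depends_on_prefix m E"
  shows "\<P>(\<omega> in mu0. E (quot_seq k \<omega>)) = \<P>(\<omega> in mu0. E \<omega>)"
proof -
  have "\<P>(\<omega> in mu0. E (quot_seq k \<omega>)) = card {b \<in> bitvecs m. E (quot_seq k b)} / 2 ^ m"
    by (rule prob_mu0_prefix_event[OF depends_on_prefix_quot_seq[OF assms]])
  also have "\<dots> = card {b \<in> bitvecs m. E b} / 2 ^ m"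
    by (simp only: card_filter_quot_seq[OF assms])
  also have "\<dots> = \<P>(\<omega> in mu0. E \<omega>)"
    by (rule prob_mu0_prefix_event[OF assms, symmetric])
  finally show ?thesis .
qed

lemma prob_binomial_half_eq_card:
  "measure_pmf.prob (binomial_pmf n (1/2)) {x. Q x} = card {b \<in> bitvecs n. Q (card {j\<in>{..<n}. b j})} / 2 ^ n"
proof -
  have "binomial_pmf n (1/2) =
      map_pmf (\<lambda>f. card {x\<in>{..<n}. f x}) (Pi_pmf {..<n} undefined (\<lambda>_. bernoulli_pmf (1/2)))"
    by (rule binomial_pmf_altdef') auto
  also have "Pi_pmf {..<n} undefined (\<lambda>_. bernoulli_pmf (1/2)) = pmf_of_set (bitvecs n)"
    by (simp add: bernoulli_pmf_half_conv_pmf_of_set Pi_pmf_of_set bitvecs_def PiE_dflt_def PiE_def extensional_def)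
  finally have "binomial_pmf n (1/2) = map_pmf (\<lambda>f. card {x\<in>{..<n}. f x}) (pmf_of_set (bitvecs n))" .
  moreover have "bitvecs n \<noteq> {}"
    using card_bitvecs[of n] by auto
  moreover have "bitvecs n \<inter> (\<lambda>f. card {x\<in>{..<n}. f x}) -` {x. Q x} = {b \<in> bitvecs n. Q (card {j\<in>{..<n}. b j})}"
    by auto
  ultimately show ?thesis by (simp add: measure_pmf_of_set card_bitvecs)
qed

lemma prob_mu0_walk_binomial:
  "\<P>(\<omega> in mu0. Q (walk \<omega> n n)) = measure_pmf.prob (binomial_pmf n (1/2)) {x. Q x}"
proof -
  have "\<P>(\<omega> in mu0. Q (walk \<omega> n n)) = card {b \<in> bitvecs n. Q (walk b n n)} / 2 ^ n"
    by (rule prob_mu0_prefix_event[OF depends_on_prefix_walk])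
  then show ?thesis by (simp only: card_walk_eq_card_ones prob_binomial_half_eq_card)
qed

section \<open>Hitting-time bounds from one round of the walk\<close>

lemma exp_neg_le_inverse: "(x::real) > 0 \<Longrightarrow> exp (- x) \<le> 1 / x"
proof -
  assume "x > 0"
  moreover have "x \<le> exp x" using exp_ge_add_one_self[of x] by linarith
  ultimately have "1 / exp x \<le> 1 / x" by (intro divide_left_mono) auto
  then show ?thesis by (simp add: exp_minus field_simps)
qed

lemma binomial_half_tails:
  fixes n :: nat and \<epsilon> :: real
  assumes "n > 0" "\<epsilon> > 0"
  shows "measure_pmf.prob (binomial_pmf n (1/2)) {x. x / n \<ge> 1/2 + \<epsilon>} \<le> 1 / (2 * n * \<epsilon>\<^sup>2)"
    and "measure_pmf.prob (binomial_pmf n (1/2)) {x. x / n \<le> 1/2 - \<epsilon>} \<le> 1 / (2 * n * \<epsilon>\<^sup>2)"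
proof -
  interpret binomial_distribution n "1/2" by unfold_locales auto
  have exp_le: "exp (-2 * n * \<epsilon>\<^sup>2) \<le> 1 / (2 * n * \<epsilon>\<^sup>2)"
    using exp_neg_le_inverse[of "2 * n * \<epsilon>\<^sup>2"] assms by simp
  show "measure_pmf.prob (binomial_pmf n (1/2)) {x. x / n \<ge> 1/2 + \<epsilon>} \<le> 1 / (2 * n * \<epsilon>\<^sup>2)"
    using prob_ge'[of \<epsilon>] exp_le assms by linarith
  show "measure_pmf.prob (binomial_pmf n (1/2)) {x. x / n \<le> 1/2 - \<epsilon>} \<le> 1 / (2 * n * \<epsilon>\<^sup>2)"
    using prob_le'[of \<epsilon>] exp_le assms by linarith
qed

text \<open>\<open>upper_level q n = \<lfloor>(1/2 + 1/q) n\<rfloor>\<close> and \<open>lower_level q n = \<lceil>(1/2 - 1/q) n\<rceil>\<close>.\<close>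
definition upper_level :: "nat \<Rightarrow> nat \<Rightarrow> nat" where
  "upper_level q n = (q + 2) * n div (2 * q)"

definition lower_level :: "nat \<Rightarrow> nat \<Rightarrow> nat" where
  "lower_level q n = ((q - 2) * n + 2 * q - 1) div (2 * q)"

lemma prob_walk_above_upper_level:
  assumes "q \<ge> 3" "n \<ge> 1"
  shows "\<P>(\<omega> in mu0. upper_level q n < walk \<omega> n n) \<le> real q ^ 2 / (2 * n)"
proof -
  have "{x. upper_level q n < x} \<subseteq> {x. x / n \<ge> 1/2 + 1/q}"
  proof
    fix x assume "x \<in> {x. upper_level q n < x}"
    then have "(upper_level q n + 1) * (2 * q) \<le> x * (2 * q)"
      by (intro mult_le_mono1) simp
    moreover have "(q + 2) * n < (upper_level q n + 1) * (2 * q)"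
      unfolding upper_level_def using assms(1) by (simp add: dividend_less_div_times)
    ultimately have "real ((q + 2) * n) < real (x * (2 * q))" by linarith
    then have "(1/2 + 1/q) * n \<le> x" using assms(1) by (simp add: field_simps)
    then show "x \<in> {x. x / n \<ge> 1/2 + 1/q}" using assms(2) by (simp add: field_simps)
  qed
  then have "\<P>(\<omega> in mu0. upper_level q n < walk \<omega> n n) \<le>
      measure_pmf.prob (binomial_pmf n (1/2)) {x. x / n \<ge> 1/2 + 1/q}"
    unfolding prob_mu0_walk_binomial[where Q = "\<lambda>x. upper_level q n < x"]
    by (rule measure_pmf.finite_measure_mono) simp
  also have "\<dots> \<le> real q ^ 2 / (2 * n)"
    using binomial_half_tails(1)[of n "1/q"] assms by (simp add: field_simps)
  finally show ?thesis .
qed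

lemma prob_walk_below_lower_level:
  assumes "q \<ge> 3" "n \<ge> 1"
  shows "\<P>(\<omega> in mu0. walk \<omega> n n < lower_level q n) \<le> real q ^ 2 / (2 * n)"
proof -
  have "{x. x < lower_level q n} \<subseteq> {x. x / n \<le> 1/2 - 1/q}"
  proof
    fix x assume "x \<in> {x. x < lower_level q n}"
    then have "x + 1 \<le> lower_level q n" by simp
    then have "(x + 1) * (2 * q) \<le> (q - 2) * n + 2 * q - 1"
      unfolding lower_level_def using assms(1) by (subst (asm) less_eq_div_iff_mult_less_eq) auto
    then have "x * (2 * q) \<le> (q - 2) * n" by (simp add: algebra_simps)
    then have "real (x * (2 * q)) \<le> real ((q - 2) * n)" by (simp only: of_nat_le_iff)
    then have "real x * (2 * q) \<le> (real q - 2) * n" using assms(1) by (simp add: of_nat_diff)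
    then have "x \<le> (1/2 - 1/q) * n" using assms(1) by (simp add: field_simps)
    then show "x \<in> {x. x / n \<le> 1/2 - 1/q}" using assms(2) by (simp add: field_simps)
  qed
  then have "\<P>(\<omega> in mu0. walk \<omega> n n < lower_level q n) \<le>
      measure_pmf.prob (binomial_pmf n (1/2)) {x. x / n \<le> 1/2 - 1/q}"
    unfolding prob_mu0_walk_binomial[where Q = "\<lambda>x. x < lower_level q n"]
    by (rule measure_pmf.finite_measure_mono) simp
  also have "\<dots> \<le> real q ^ 2 / (2 * n)"
    using binomial_half_tails(2)[of n "1/q"] assms by (simp add: field_simps)
  finally show ?thesis .
qed

lemma bound_by_recursion:
  fixes P :: "nat \<Rightarrow> real" and f :: "nat \<Rightarrow> nat" and c :: real and q L :: nat
  assumes "q \<ge> 1" "L \<ge> 1" "c \<ge> 0"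
    and base: "\<And>n. n \<le> L \<Longrightarrow> P n \<le> 0"
    and f_less: "\<And>n. L < n \<Longrightarrow> f n < n"
    and f_contracts: "\<And>n. L < n \<Longrightarrow> q * f n \<le> (q - 1) * n"
    and P_step: "\<And>n. L < n \<Longrightarrow> P n \<le> c / n + P (f n)"
  shows "P n \<le> c * q / L"
proof -
  have "P n \<le> c * (if n \<le> L then 0 else real q / L - (real q - 1) / n)"
  proof (induction n rule: less_induct)
    case (less n)
    show ?case
    proof (cases "n \<le> L")
      case False
      then have n: "L < n" "real n > 0" using \<open>L \<ge> 1\<close> by auto
      have "1 / n + (if f n \<le> L then 0 else real q / L - (real q - 1) / f n) \<le> real q / L - (real q - 1) / n"
      proof (cases "f n \<le> L")
        case True
        have "real q / n \<le> q / L" using n \<open>L \<ge> 1\<close> by (intro divide_left_mono) auto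
        then show ?thesis using True \<open>q \<ge> 1\<close> by (simp add: diff_divide_distrib)
      next
        case False
        then have "real (f n) > 0" by simp
        moreover have "real q * f n \<le> (real q - 1) * n"
          using f_contracts[OF n(1)] \<open>q \<ge> 1\<close> by (metis of_nat_1 of_nat_diff of_nat_le_iff of_nat_mult)
        ultimately have "real q / n \<le> (real q - 1) / f n"
          using n by (simp add: divide_le_eq le_divide_eq mult.commute)
        then show ?thesis using False by (simp add: diff_divide_distrib)
      qed
      moreover have "P (f n) \<le> c * (if f n \<le> L then 0 else real q / L - (real q - 1) / f n)"
        using less.IH f_less[OF n(1)] by blast
      ultimately have "c / n + P (f n) \<le> c * (real q / L - (real q - 1) / n)"
        using \<open>c \<ge> 0\<close> mult_left_mono by (fastforce simp: distrib_left)
      then show ?thesis using P_step[OF n(1)] n(1) by simp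
    qed (simp add: base)
  qed
  also have "\<dots> \<le> c * (real q / L)"
    using assms(1,3) by (intro mult_left_mono) auto
  finally show ?thesis by simp
qed

text \<open>A round of \<open>n\<close> steps from height \<open>n\<close> typically ends between \<open>lower_level q n\<close> and
  \<open>upper_level q n\<close>; summing the geometric series of round lengths gives the hitting-time
  bounds \<open>2qn/(q - 2)\<close> and \<open>2qn/(q + 2)\<close>, up to the last rounds below height \<open>L\<close>.\<close>
definition upper_time :: "nat \<Rightarrow> nat \<Rightarrow> nat \<Rightarrow> nat" where
  "upper_time q B n = (2 * q * n) div (q - 2) + B"

definition lower_time :: "nat \<Rightarrow> nat \<Rightarrow> nat \<Rightarrow> nat" where
  "lower_time q L n = (2 * q * (n - L)) div (q + 2)"

lemma upper_level_facts:
  assumes q: "q \<ge> 4" and n: "n \<ge> 1"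
  shows "upper_level q n < n" "q * upper_level q n \<le> (q - 1) * n" "2 * q * upper_level q n \<le> (q + 2) * n"
proof -
  have d: "upper_level q n * (2 * q) \<le> (q + 2) * n"
    unfolding upper_level_def using q by (subst less_eq_div_iff_mult_less_eq[symmetric]) auto
  then show "2 * q * upper_level q n \<le> (q + 2) * n" by (simp add: mult.commute)
  have "(q + 2) * n \<le> 2 * (q - 1) * n" using q by (intro mult_le_mono1) auto
  with d have "2 * (q * upper_level q n) \<le> 2 * ((q - 1) * n)" by (simp add: algebra_simps)
  then show "q * upper_level q n \<le> (q - 1) * n" by simp
  have "n * 4 \<le> n * q" using q by simp
  then have "n + n < n * q" using n by linarith
  then have "(q + 2) * n < n * (2 * q)" by (simp add: algebra_simps)
  then show "upper_level q n < n" unfolding upper_level_def using q by (subst div_less_iff_less_mult) auto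
qed

lemma upper_time_step:
  assumes q: "q \<ge> 4" and n: "n \<ge> 1"
  shows "n + upper_time q B (upper_level q n) \<le> upper_time q B n"
proof -
  have q2: "q - 2 \<noteq> 0" using q by simp
  have "(2 * q * upper_level q n) div (q - 2) \<le> ((q + 2) * n) div (q - 2)"
    using upper_level_facts(3)[OF q n] by (rule div_le_mono)
  moreover have "(2 * q * n) div (q - 2) = n + ((q + 2) * n) div (q - 2)"
  proof -
    obtain q' where q': "q = q' + 4" using q le_Suc_ex by (metis add.commute)
    have "2 * q * n = (q + 2) * n + n * (q - 2)" unfolding q' by (simp add: algebra_simps)
    then have "(2 * q * n) div (q - 2) = ((q + 2) * n + n * (q - 2)) div (q - 2)" by (rule arg_cong)
    also have "\<dots> = n + ((q + 2) * n) div (q - 2)" by (rule div_mult_self1[OF q2])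
    finally show ?thesis .
  qed
  ultimately show ?thesis unfolding upper_time_def by simp
qed

text \<open>The walk after the first round is a walk for the coefficients of \<open>r / (x + 1)\<^sup>n\<close>
  (\<open>walk_add\<close>), which are again uniformly distributed.\<close>
lemma prob_not_hit_by_upper_time_step:
  assumes q: "q \<ge> 4" and n: "n \<ge> 1"
  shows "\<P>(\<omega> in mu0. walk \<omega> n (upper_time q B n) \<noteq> 0) \<le> real q ^ 2 / 2 / n +
    \<P>(\<omega> in mu0. walk \<omega> (upper_level q n) (upper_time q B (upper_level q n)) \<noteq> 0)"
proof -
  define n1 where "n1 = upper_level q n"
  let ?A = "\<lambda>\<omega>. upper_level q n < walk \<omega> n n"
  let ?B = "\<lambda>\<omega>. walk (quot_seq n \<omega>) n1 (upper_time q B n1) \<noteq> 0"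
  have "?A \<omega> \<or> ?B \<omega>" if "walk \<omega> n (upper_time q B n) \<noteq> 0" for \<omega>
  proof (rule ccontr)
    assume "\<not> ?thesis"
    then have "walk \<omega> n n \<le> n1" "walk (quot_seq n \<omega>) n1 (upper_time q B n1) = 0"
      unfolding n1_def by auto
    then have "walk \<omega> n (n + upper_time q B n1) = 0"
      unfolding walk_add using walk_mono_start by (metis le_zero_eq)
    then have "walk \<omega> n (upper_time q B n) = 0"
      using upper_time_step[OF q n, of B] unfolding n1_def by (rule walk_eq_0_mono)
    then show False using that by simp
  qed
  note covered = this
  have dA: "depends_on_prefix n ?A"
    by (rule depends_on_prefix_walk[where P = "\<lambda>x. upper_level q n < x"])
  have dB: "depends_on_prefix n ?B"
    using upper_level_facts(1)[OF q n] n1_def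
    by (intro depends_on_prefix_mono[OF _
          depends_on_prefix_quot_seq[OF depends_on_prefix_walk[where P = "\<lambda>x. x \<noteq> 0"]]]) simp
  have "\<P>(\<omega> in mu0. walk \<omega> n (upper_time q B n) \<noteq> 0) \<le> \<P>(\<omega> in mu0. ?A \<omega> \<or> ?B \<omega>)"
    using covered by (intro prob_mu0_mono[OF depends_on_prefix_disj[OF dA dB]])
  also have "\<dots> \<le> \<P>(\<omega> in mu0. ?A \<omega>) + \<P>(\<omega> in mu0. ?B \<omega>)"
    by (rule prob_mu0_disj_le[OF dA dB])
  also have "\<dots> \<le> real q ^ 2 / 2 / n + \<P>(\<omega> in mu0. walk \<omega> n1 (upper_time q B n1) \<noteq> 0)"
    using prob_walk_above_upper_level[of q n] q n
      prob_mu0_quot_seq[OF depends_on_prefix_walk[where P = "\<lambda>x. x \<noteq> 0"], of n]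
    by simp
  finally show "\<P>(\<omega> in mu0. walk \<omega> n (upper_time q B n) \<noteq> 0) \<le> real q ^ 2 / 2 / n +
      \<P>(\<omega> in mu0. walk \<omega> (upper_level q n) (upper_time q B (upper_level q n)) \<noteq> 0)"
    unfolding n1_def .
qed

lemma prob_not_hit_by_upper_time:
  assumes q: "q \<ge> 4" and L: "L \<ge> 1" and absorbed: "\<And>\<omega>. walk \<omega> L B = 0"
  shows "\<P>(\<omega> in mu0. walk \<omega> n (upper_time q B n) \<noteq> 0) \<le> real q ^ 3 / (2 * L)"
proof -
  have "\<P>(\<omega> in mu0. walk \<omega> n (upper_time q B n) \<noteq> 0) \<le> (real q ^ 2 / 2) * q / L"
  proof (rule bound_by_recursion[where f = "upper_level q" and c = "real q ^ 2 / 2"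
        and P = "\<lambda>n. \<P>(\<omega> in mu0. walk \<omega> n (upper_time q B n) \<noteq> 0)"])
    fix n assume "n \<le> L"
    have "walk \<omega> n (upper_time q B n) = 0" for \<omega>
    proof -
      have "walk \<omega> L (upper_time q B n) = 0"
        by (rule walk_eq_0_mono[OF absorbed]) (simp add: upper_time_def)
      then show ?thesis using walk_mono_start[OF \<open>n \<le> L\<close>, of \<omega>] by (metis le_zero_eq)
    qed
    then show "\<P>(\<omega> in mu0. walk \<omega> n (upper_time q B n) \<noteq> 0) \<le> 0" by simp
  next
    fix n assume "L < n"
    then have n: "n \<ge> 1" using L by simp
    show "upper_level q n < n" "q * upper_level q n \<le> (q - 1) * n"
      using upper_level_facts[OF q n] by auto
    show "\<P>(\<omega> in mu0. walk \<omega> n (upper_time q B n) \<noteq> 0) \<le> real q ^ 2 / 2 / n +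
        \<P>(\<omega> in mu0. walk \<omega> (upper_level q n) (upper_time q B (upper_level q n)) \<noteq> 0)"
      by (rule prob_not_hit_by_upper_time_step[OF q n])
  qed (use q L in auto)
  then show ?thesis by (simp add: power3_eq_cube power2_eq_square)
qed

lemma lower_level_facts:
  assumes q: "q \<ge> 4" and n: "n \<ge> 2"
  shows "lower_level q n < n" "q * lower_level q n \<le> (q - 1) * n" "(q - 2) * n \<le> 2 * q * lower_level q n" "1 \<le> lower_level q n"
proof -
  obtain q' where q': "q = q' + 4" using q le_Suc_ex by (metis add.commute)
  obtain n' where n': "n = n' + 2" using n le_Suc_ex by (metis add.commute)
  define X where "X = (q - 2) * n + 2 * q - 1"
  have lower_level: "lower_level q n = X div (2 * q)" unfolding lower_level_def X_def ..
  have d: "lower_level q n * (2 * q) \<le> X" unfolding lower_level using q by (subst less_eq_div_iff_mult_less_eq[symmetric]) auto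
  have m: "X = lower_level q n * (2 * q) + X mod (2 * q)" unfolding lower_level by (rule div_mult_mod_eq[symmetric])
  have r: "X mod (2 * q) < 2 * q" using q by simp
  have X': "X = q' * n' + 2 * q' + 2 * n' + q' * 2 + 11" unfolding X_def q' n' by (simp add: algebra_simps)
  show "lower_level q n < n" unfolding lower_level using q
    by (subst div_less_iff_less_mult) (auto simp: X' q' n' algebra_simps)
  have "2 * (q * lower_level q n) \<le> 2 * ((q - 1) * n)"
  proof -
    have "2 * (q * lower_level q n) = lower_level q n * (2 * q)" by simp
    also have "\<dots> \<le> X" by (rule d)
    also have "X \<le> 2 * ((q - 1) * n)" unfolding X' q' n' by (simp add: algebra_simps)
    finally show ?thesis .
  qed
  then show "q * lower_level q n \<le> (q - 1) * n" by simp
  have "X < lower_level q n * (2 * q) + 2 * q" using m r by linarith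
  then have "(q - 2) * n + 2 * q < lower_level q n * (2 * q) + 2 * q + 1" unfolding X_def using q by simp
  then show "(q - 2) * n \<le> 2 * q * lower_level q n" by (simp add: algebra_simps)
  show "1 \<le> lower_level q n" unfolding lower_level using q
    by (subst less_eq_div_iff_mult_less_eq) (auto simp: X' q')
qed

lemma lower_time_step:
  assumes q: "q \<ge> 4" and n: "n \<ge> 2" and nL: "L < n"
  shows "lower_time q L n \<le> n + lower_time q L (lower_level q n)"
proof -
  define a where "a = lower_level q n"
  have h: "(q - 2) * n \<le> 2 * q * a" using lower_level_facts(3)[OF q n] a_def by simp
  have q2: "q + 2 \<noteq> 0" by simp
  have ineq: "2 * q * (n - L) \<le> 2 * q * (a - L) + n * (q + 2)"
  proof (cases "L \<le> a")
    case True
    have "int (2 * q * (n - L)) = 2 * int q * int n - 2 * int q * int L" using nL by (simp add: of_nat_diff algebra_simps)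
    moreover have "int (2 * q * (a - L)) = 2 * int q * int a - 2 * int q * int L" using True by (simp add: of_nat_diff algebra_simps)
    moreover have "int ((q - 2) * n) = int q * int n - 2 * int n" using q by (simp add: of_nat_diff algebra_simps)
    moreover have "int ((q - 2) * n) \<le> 2 * int q * int a" using h by (metis of_nat_le_iff of_nat_mult of_nat_numeral)
    ultimately have "int (2 * q * (n - L)) \<le> int (2 * q * (a - L) + n * (q + 2))" by (simp add: algebra_simps)
    then show ?thesis by (simp only: of_nat_le_iff)
  next
    case False
    have "int (2 * q * (n - L)) = 2 * int q * int n - 2 * int q * int L" using nL by (simp add: of_nat_diff algebra_simps)
    moreover have "int ((q - 2) * n) = int q * int n - 2 * int n" using q by (simp add: of_nat_diff algebra_simps)
    moreover have "int ((q - 2) * n) \<le> 2 * int q * int a" using h by (metis of_nat_le_iff of_nat_mult of_nat_numeral)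
    moreover have "int q * int a \<le> int q * int L" using False by (intro mult_left_mono) auto
    ultimately have "int (2 * q * (n - L)) \<le> int (n * (q + 2))" by (simp add: algebra_simps)
    then show ?thesis by (simp only: of_nat_le_iff)
  qed
  have "lower_time q L n \<le> (2 * q * (a - L) + n * (q + 2)) div (q + 2)"
    unfolding lower_time_def by (rule div_le_mono[OF ineq])
  also have "\<dots> = n + lower_time q L a" unfolding lower_time_def by (rule div_mult_self1[OF q2])
  finally show ?thesis unfolding a_def .
qed

lemma prob_hit_by_lower_time_step:
  assumes q: "q \<ge> 4" and n: "n \<ge> 2" and "L < n"
  shows "\<P>(\<omega> in mu0. 0 < n \<and> walk \<omega> n (lower_time q L n) = 0) \<le> real q ^ 2 / 2 / n +
    \<P>(\<omega> in mu0. 0 < lower_level q n \<and>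
      walk \<omega> (lower_level q n) (lower_time q L (lower_level q n)) = 0)"
proof -
  define n1 where "n1 = lower_level q n"
  have "0 < n1" using lower_level_facts(4)[OF q n] unfolding n1_def by simp
  let ?A = "\<lambda>\<omega>. walk \<omega> n n < lower_level q n"
  let ?B = "\<lambda>\<omega>. 0 < n1 \<and> walk (quot_seq n \<omega>) n1 (lower_time q L n1) = 0"
  have "?A \<omega> \<or> ?B \<omega>" if "0 < n \<and> walk \<omega> n (lower_time q L n) = 0" for \<omega>
  proof (rule ccontr)
    assume "\<not> ?thesis"
    then have "n1 \<le> walk \<omega> n n" "walk (quot_seq n \<omega>) n1 (lower_time q L n1) \<noteq> 0"
      using \<open>0 < n1\<close> unfolding n1_def by auto
    moreover have "walk \<omega> n (n + lower_time q L n1) \<le> walk \<omega> n (lower_time q L n)"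
      using lower_time_step[OF q n \<open>L < n\<close>] unfolding n1_def by (rule walk_antimono)
    ultimately show False
      using that walk_mono_start[of n1 "walk \<omega> n n" "quot_seq n \<omega>" "lower_time q L n1"]
      unfolding walk_add by simp
  qed
  note covered = this
  have dA: "depends_on_prefix n ?A"
    by (rule depends_on_prefix_walk[where P = "\<lambda>x. x < lower_level q n"])
  have dB: "depends_on_prefix n ?B"
    using lower_level_facts(1)[OF q n] n1_def
    by (intro depends_on_prefix_mono[OF _
          depends_on_prefix_quot_seq[OF depends_on_prefix_walk[where P = "\<lambda>x. 0 < n1 \<and> x = 0"]]]) simp
  have "\<P>(\<omega> in mu0. 0 < n \<and> walk \<omega> n (lower_time q L n) = 0) \<le> \<P>(\<omega> in mu0. ?A \<omega> \<or> ?B \<omega>)"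
    using covered by (intro prob_mu0_mono[OF depends_on_prefix_disj[OF dA dB]])
  also have "\<dots> \<le> \<P>(\<omega> in mu0. ?A \<omega>) + \<P>(\<omega> in mu0. ?B \<omega>)"
    by (rule prob_mu0_disj_le[OF dA dB])
  also have "\<dots> \<le> real q ^ 2 / 2 / n + \<P>(\<omega> in mu0. 0 < n1 \<and> walk \<omega> n1 (lower_time q L n1) = 0)"
    using prob_walk_below_lower_level[of q n] q n
      prob_mu0_quot_seq[OF depends_on_prefix_walk[where P = "\<lambda>x. 0 < n1 \<and> x = 0"], of n]
    by simp
  finally show "\<P>(\<omega> in mu0. 0 < n \<and> walk \<omega> n (lower_time q L n) = 0) \<le> real q ^ 2 / 2 / n +
      \<P>(\<omega> in mu0. 0 < lower_level q n \<and>
        walk \<omega> (lower_level q n) (lower_time q L (lower_level q n)) = 0)"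
    unfolding n1_def .
qed

lemma prob_hit_by_lower_time:
  assumes q: "q \<ge> 4" and L: "L \<ge> 1"
  shows "\<P>(\<omega> in mu0. 0 < n \<and> walk \<omega> n (lower_time q L n) = 0) \<le> real q ^ 3 / (2 * L)"
proof -
  have "\<P>(\<omega> in mu0. 0 < n \<and> walk \<omega> n (lower_time q L n) = 0) \<le> (real q ^ 2 / 2) * q / L"
  proof (rule bound_by_recursion[where f = "lower_level q" and c = "real q ^ 2 / 2"
        and P = "\<lambda>n. \<P>(\<omega> in mu0. 0 < n \<and> walk \<omega> n (lower_time q L n) = 0)"])
    fix n assume "n \<le> L"
    then show "\<P>(\<omega> in mu0. 0 < n \<and> walk \<omega> n (lower_time q L n) = 0) \<le> 0"
      by (simp add: lower_time_def)
  next
    fix n assume "L < n"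
    then have n: "n \<ge> 2" using L by simp
    show "lower_level q n < n" "q * lower_level q n \<le> (q - 1) * n"
      using lower_level_facts[OF q n] by auto
    show "\<P>(\<omega> in mu0. 0 < n \<and> walk \<omega> n (lower_time q L n) = 0) \<le> real q ^ 2 / 2 / n +
        \<P>(\<omega> in mu0. 0 < lower_level q n \<and>
          walk \<omega> (lower_level q n) (lower_time q L (lower_level q n)) = 0)"
      by (rule prob_hit_by_lower_time_step[OF q n \<open>L < n\<close>])
  qed (use q L in auto)
  then show ?thesis by (simp add: power3_eq_cube power2_eq_square)
qed

definition absorb_time :: "nat \<Rightarrow> nat" where
  "absorb_time L = L * 2 ^ (LEAST M. L < 2 ^ M)"

lemma walk_absorb_time: "walk \<omega> L (absorb_time L) = 0"
proof -
  have "L < 2 ^ (LEAST M. L < 2 ^ M)" by (rule LeastI[of _ L]) (rule less_exp)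
  then show ?thesis unfolding absorb_time_def by (rule walk_absorbed)
qed

lemma absorb_time_le: assumes "L \<ge> 1" shows "absorb_time L \<le> 2 * L^2"
proof -
  define M where "M = (LEAST M. L < 2 ^ M)"
  have "M \<noteq> 0"
  proof
    assume "M = 0"
    then have "L < 2 ^ 0" unfolding M_def by (metis LeastI less_exp)
    with assms show False by simp
  qed
  then obtain M' where M': "M = Suc M'" by (cases M) auto
  have "\<not> L < 2 ^ M'" using not_less_Least[of M' "\<lambda>M. L < 2 ^ M"] M' unfolding M_def by simp
  then have "2 ^ M \<le> 2 * L" using M' by simp
  then have "L * 2 ^ M \<le> L * (2 * L)" by (rule mult_le_mono2)
  then show ?thesis unfolding absorb_time_def M_def[symmetric] by (simp add: power2_eq_square)
qed

section \<open>Borel--Cantelli along \<open>n = k\<^sup>6\<close>\<close>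

text \<open>With cutoff \<open>L = k\<^sup>2\<close> the failure probabilities \<open>O(1/k\<^sup>2)\<close> are summable, while the
  absorption time \<open>O(k\<^sup>4)\<close> below the cutoff is negligible against \<open>n = k\<^sup>6\<close>.\<close>
definition bad_stage :: "nat \<Rightarrow> nat \<Rightarrow> (nat \<Rightarrow> bool) \<Rightarrow> bool" where
  "bad_stage q k \<omega> \<longleftrightarrow>
     walk \<omega> (k ^ 6) (upper_time q (absorb_time (k ^ 2)) (k ^ 6)) \<noteq> 0 \<or>
     (0 < k ^ 6 \<and> walk \<omega> (k ^ 6) (lower_time q (k ^ 2) (k ^ 6)) = 0)"

lemma depends_on_prefix_bad_stage: "depends_on_prefix (k ^ 6) (bad_stage q k)"
  unfolding bad_stage_def[abs_def] by (intro depends_on_prefix_disj depends_on_prefix_walk)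

lemma prob_bad_stage_le:
  assumes "q \<ge> 4" "k \<ge> 1"
  shows "\<P>(\<omega> in mu0. bad_stage q k \<omega>) \<le> real q ^ 3 / real k ^ 2"
proof -
  have L: "k ^ 2 \<ge> 1" using assms(2) by simp
  have "\<P>(\<omega> in mu0. bad_stage q k \<omega>) \<le>
      \<P>(\<omega> in mu0. walk \<omega> (k ^ 6) (upper_time q (absorb_time (k ^ 2)) (k ^ 6)) \<noteq> 0) +
      \<P>(\<omega> in mu0. 0 < k ^ 6 \<and> walk \<omega> (k ^ 6) (lower_time q (k ^ 2) (k ^ 6)) = 0)"
    unfolding bad_stage_def by (rule prob_mu0_disj_le[OF depends_on_prefix_walk depends_on_prefix_walk])
  also have "\<dots> \<le> real q ^ 3 / (2 * real (k ^ 2)) + real q ^ 3 / (2 * real (k ^ 2))"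
    using prob_not_hit_by_upper_time[OF assms(1) L walk_absorb_time, of "k ^ 6"]
      prob_hit_by_lower_time[OF assms(1) L, of "k ^ 6"]
    by (intro add_mono) auto
  finally show ?thesis by simp
qed

lemma AE_eventually_not_bad_stage:
  assumes "q \<ge> 4"
  shows "AE \<omega> in mu0. \<forall>\<^sub>F k in sequentially. \<not> bad_stage q k \<omega>"
proof -
  define A where "A k = {\<omega> \<in> space mu0. bad_stage q k \<omega>}" for k
  have A_sets: "A k \<in> sets mu0" for k
    unfolding A_def by (rule sets_mu0_prefix_event[OF depends_on_prefix_bad_stage])
  have "summable (\<lambda>k. real q ^ 3 * inverse (real k ^ 2))"
    by (intro summable_mult inverse_power_summable) simp
  moreover have "norm (measure mu0 (A k)) \<le> real q ^ 3 * inverse (real k ^ 2)" if "k \<ge> 1" for k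
    using prob_bad_stage_le[OF assms that] unfolding A_def by (simp add: divide_inverse)
  ultimately have "summable (\<lambda>k. measure mu0 (A k))"
    by (rule summable_comparison_test'[where N = 1])
  then have "AE \<omega> in mu0. \<forall>\<^sub>F k in sequentially. \<omega> \<in> space mu0 - A k"
    using A_sets by (intro borel_cantelli_AE1) (simp_all add: less_top[symmetric])
  then show ?thesis unfolding A_def by simp
qed

section \<open>From the stages to the limit\<close>

lemma hitting_time_bounds:
  assumes "\<not> bad_stage q k \<omega>" "\<not> bad_stage q (Suc k) \<omega>" "k \<ge> 1"
    and "k ^ 6 \<le> n" "n \<le> Suc k ^ 6"
  shows "hitting_time \<omega> n \<le> upper_time q (absorb_time (Suc k ^ 2)) (Suc k ^ 6)"
    and "lower_time q (k ^ 2) (k ^ 6) < hitting_time \<omega> n"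
proof -
  define U where "U = upper_time q (absorb_time (Suc k ^ 2)) (Suc k ^ 6)"
  have "walk \<omega> (Suc k ^ 6) U = 0"
    using assms(2) unfolding bad_stage_def U_def by auto
  then have hit_U: "walk \<omega> n U = 0"
    using walk_mono_start[OF assms(5), of \<omega> U] by simp
  then show "hitting_time \<omega> n \<le> U"
    unfolding hitting_time_def by (rule Least_le)
  have "walk \<omega> n (hitting_time \<omega> n) = 0"
    unfolding hitting_time_def using hit_U by (rule LeastI)
  moreover have "walk \<omega> (k ^ 6) (lower_time q (k ^ 2) (k ^ 6)) \<noteq> 0"
    using assms(1,3) unfolding bad_stage_def by auto
  ultimately show "lower_time q (k ^ 2) (k ^ 6) < hitting_time \<omega> n"
    using walk_antimono[of "hitting_time \<omega> n" "lower_time q (k ^ 2) (k ^ 6)" \<omega> "k ^ 6"]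
      walk_mono_start[OF assms(4), of \<omega> "hitting_time \<omega> n"]
    by (metis le_zero_eq not_less)
qed

lemma real_div_minus_1_le_div: "real a / real b - 1 \<le> real (a div b)"
  using real_of_int_div3[of "int a" "int b"] by (simp add: zdiv_int[symmetric])

lemma hitting_time_ratio_bounds:
  assumes "q \<ge> 4" "\<not> bad_stage q k \<omega>" "\<not> bad_stage q (Suc k) \<omega>" "k \<ge> 1"
    and "k ^ 6 \<le> n" "n \<le> Suc k ^ 6"
  shows "real (hitting_time \<omega> n) / n \<le>
      (2 * real q / (real q - 2) * (real k + 1) ^ 6 + 2 * (real k + 1) ^ 4) / real k ^ 6"
    and "(2 * real q / (real q + 2) * (real k ^ 6 - real k ^ 2) - 1) / (real k + 1) ^ 6 \<le>
      real (hitting_time \<omega> n) / n"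
proof -
  note hit = hitting_time_bounds[OF assms(2-6)]
  have k: "real k > 0" using assms(4) by simp
  have n: "real k ^ 6 \<le> n" "n \<le> (real k + 1) ^ 6"
    using assms(5,6) by (metis of_nat_le_iff of_nat_power of_nat_Suc add.commute)+
  have "0 < n" using assms(4,5) one_le_power[of k 6] by linarith
  have "real (hitting_time \<omega> n) \<le>
      real (2 * q * Suc k ^ 6 div (q - 2)) + real (absorb_time (Suc k ^ 2))"
    using hit(1) unfolding upper_time_def by linarith
  also have "\<dots> \<le> real (2 * q * Suc k ^ 6) / real (q - 2) + real (2 * (Suc k ^ 2) ^ 2)"
    by (intro add_mono of_nat_div_le_of_nat)
      (use absorb_time_le[of "Suc k ^ 2"] in \<open>simp only: of_nat_le_iff, simp\<close>)
  also have "\<dots> = 2 * real q / (real q - 2) * (real k + 1) ^ 6 + 2 * (real k + 1) ^ 4"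
    using assms(1) by (simp add: of_nat_diff power_mult[symmetric] add.commute)
  finally show "real (hitting_time \<omega> n) / n \<le>
      (2 * real q / (real q - 2) * (real k + 1) ^ 6 + 2 * (real k + 1) ^ 4) / real k ^ 6"
    using n k \<open>0 < n\<close> by (intro frac_le) auto
  have "2 * real q / (real q + 2) * (real k ^ 6 - real k ^ 2) - 1 \<le> real (2 * q * (k ^ 6 - k ^ 2) div (q + 2))"
    using real_div_minus_1_le_div[of "2 * q * (k ^ 6 - k ^ 2)" "q + 2"]
      power_increasing[of 2 6 k] assms(4)
    by (simp add: of_nat_diff add.commute)
  also have "\<dots> \<le> hitting_time \<omega> n"
    using hit(2) unfolding lower_time_def by simp
  finally show "(2 * real q / (real q + 2) * (real k ^ 6 - real k ^ 2) - 1) / (real k + 1) ^ 6 \<le>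
      real (hitting_time \<omega> n) / n"
    using n k \<open>0 < n\<close> by (intro frac_le) auto
qed

lemma tendsto_upper_ratio:
  fixes c d :: real
  shows "(\<lambda>k. (c * (real k + 1) ^ 6 + d * (real k + 1) ^ 4) / real k ^ 6) \<longlonglongrightarrow> c"
proof -
  have "(\<lambda>k. c * (real (Suc k) / real k) ^ 6 + d * (real (Suc k) / real k) ^ 4 * (1 / real k) ^ 2)
      \<longlonglongrightarrow> c * 1 ^ 6 + d * 1 ^ 4 * 0 ^ 2"
    by (intro tendsto_intros LIMSEQ_Suc_n_over_n)
  moreover have "c * (real (Suc k) / real k) ^ 6 + d * (real (Suc k) / real k) ^ 4 * (1 / real k) ^ 2
      = (c * (real k + 1) ^ 6 + d * (real k + 1) ^ 4) / real k ^ 6" for k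
    by (cases "k = 0") (simp_all add: field_simps power_divide)
  ultimately show ?thesis by simp
qed

lemma tendsto_lower_ratio:
  fixes c d :: real
  shows "(\<lambda>k. (c * (real k ^ 6 - real k ^ 2) - d) / (real k + 1) ^ 6) \<longlonglongrightarrow> c"
proof -
  have "(\<lambda>k. c * (real k / real (Suc k)) ^ 6 - c * (real k / real (Suc k)) ^ 2 * (1 / real (Suc k)) ^ 4
        - d * (1 / real (Suc k)) ^ 6) \<longlonglongrightarrow> c * 1 ^ 6 - c * 1 ^ 2 * 0 ^ 4 - d * 0 ^ 6"
    by (intro tendsto_intros LIMSEQ_n_over_Suc_n LIMSEQ_Suc[OF lim_1_over_n])
  moreover have "c * (real k / real (Suc k)) ^ 6 - c * (real k / real (Suc k)) ^ 2 * (1 / real (Suc k)) ^ 4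
        - d * (1 / real (Suc k)) ^ 6 = (c * (real k ^ 6 - real k ^ 2) - d) / (real k + 1) ^ 6" for k
    by (simp add: field_simps power_divide)
  ultimately show ?thesis by simp
qed

lemma exists_power_bracket:
  assumes "0 < d" "K ^ d \<le> n"
  shows "\<exists>k\<ge>K. k ^ d \<le> n \<and> n \<le> Suc k ^ d"
proof -
  define k where "k = (LEAST k. n < Suc k ^ d)"
  have "Suc n ^ 1 \<le> Suc n ^ d" using assms(1) by (intro power_increasing) auto
  then have "n < Suc n ^ d" by simp
  then have "n < Suc k ^ d" unfolding k_def by (rule LeastI)
  moreover have "k ^ d \<le> n"
  proof (cases k)
    case (Suc k')
    then show ?thesis using not_less_Least[of k' "\<lambda>k. n < Suc k ^ d"] unfolding k_def by simp
  qed (use assms(1) in \<open>simp add: power_0_left\<close>)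
  moreover have "K \<le> k"
  proof (rule ccontr)
    assume "\<not> K \<le> k"
    then have "Suc k ^ d \<le> K ^ d" by (intro power_mono) auto
    with \<open>n < Suc k ^ d\<close> assms(2) show False by simp
  qed
  ultimately show ?thesis by auto
qed

lemma eventually_nat_power_bracket:
  assumes "0 < d" "\<forall>\<^sub>F k in sequentially. \<forall>n. k ^ d \<le> n \<and> n \<le> Suc k ^ d \<longrightarrow> P n"
  shows "\<forall>\<^sub>F n in sequentially. P n"
proof -
  obtain K where "\<And>k n. k \<ge> K \<Longrightarrow> k ^ d \<le> n \<Longrightarrow> n \<le> Suc k ^ d \<Longrightarrow> P n"
    using assms(2) unfolding eventually_sequentially by blast
  then show ?thesis
    unfolding eventually_sequentially using exists_power_bracket[OF assms(1)] by blast
qed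

lemma two_q_ratios_near_2:
  fixes q :: real
  assumes "q \<ge> 4"
  shows "2 * q / (q - 2) + 1 / q \<le> 2 + 5 / (q - 2)"
    and "2 - 5 / (q - 2) \<le> 2 * q / (q + 2) - 1 / q"
proof -
  have "1 / q \<le> 1 / (q - 2)" "4 / (q + 2) \<le> 4 / (q - 2)"
    using assms by (auto intro!: divide_left_mono)
  moreover have "2 * q / (q - 2) = 2 + 4 / (q - 2)" "2 * q / (q + 2) = 2 - 4 / (q + 2)"
    using assms by (simp_all add: field_simps)
  ultimately show "2 * q / (q - 2) + 1 / q \<le> 2 + 5 / (q - 2)"
    and "2 - 5 / (q - 2) \<le> 2 * q / (q + 2) - 1 / q"
    by (simp_all add: add_divide_distrib[symmetric] diff_divide_distrib[symmetric])
qed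

lemma eventually_hitting_time_ratio_near_2:
  assumes "q \<ge> 4" and not_bad: "\<forall>\<^sub>F k in sequentially. \<not> bad_stage q k \<omega>"
  shows "\<forall>\<^sub>F n in sequentially. \<bar>real (hitting_time \<omega> n) / n - 2\<bar> \<le> 5 / (real q - 2)"
proof (rule eventually_nat_power_bracket[of 6])
  define U where "U = 2 * real q / (real q - 2)"
  define D where "D = 2 * real q / (real q + 2)"
  have U_D: "U + 1 / q \<le> 2 + 5 / (real q - 2)" "2 - 5 / (real q - 2) \<le> D - 1 / q"
    unfolding U_def D_def using two_q_ratios_near_2[of q] assms(1) by auto
  have "1 / real q > 0" using assms(1) by simp
  then have "\<forall>\<^sub>F k in sequentially. (U * (real k + 1) ^ 6 + 2 * (real k + 1) ^ 4) / real k ^ 6 < U + 1 / q"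
    "\<forall>\<^sub>F k in sequentially. D - 1 / q < (D * (real k ^ 6 - real k ^ 2) - 1) / (real k + 1) ^ 6"
    by (auto intro: order_tendstoD tendsto_upper_ratio tendsto_lower_ratio)
  moreover have "\<forall>\<^sub>F k in sequentially. \<not> bad_stage q (Suc k) \<omega>"
    using not_bad by (subst eventually_sequentially_Suc)
  ultimately show "\<forall>\<^sub>F k in sequentially. \<forall>n. k ^ 6 \<le> n \<and> n \<le> Suc k ^ 6 \<longrightarrow>
      \<bar>real (hitting_time \<omega> n) / n - 2\<bar> \<le> 5 / (real q - 2)"
    using not_bad eventually_ge_at_top[of 1]
  proof eventually_elim
    case (elim k)
    show ?case
    proof (intro allI impI)
      fix n assume "k ^ 6 \<le> n \<and> n \<le> Suc k ^ 6"
      then have "D - 1 / q < real (hitting_time \<omega> n) / n" "real (hitting_time \<omega> n) / n < U + 1 / q"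
        using elim hitting_time_ratio_bounds[OF assms(1), of k \<omega> n] unfolding U_def D_def by auto
      with U_D show "\<bar>real (hitting_time \<omega> n) / n - 2\<bar> \<le> 5 / (real q - 2)"
        unfolding abs_le_iff by linarith
    qed
  qed
qed simp

lemma hitting_time_ratio_tendsto_2:
  assumes "\<And>q. q \<ge> 4 \<Longrightarrow> \<forall>\<^sub>F k in sequentially. \<not> bad_stage q k \<omega>"
  shows "(\<lambda>n. real (hitting_time \<omega> n) / real n) \<longlonglongrightarrow> 2"
proof (rule tendstoI)
  fix \<epsilon> :: real assume "\<epsilon> > 0"
  obtain q0 :: nat where "5 / \<epsilon> < q0" using reals_Archimedean2 by blast
  then have "5 < \<epsilon> * q0" using \<open>\<epsilon> > 0\<close> by (simp add: divide_less_eq mult.commute)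
  then have "5 / (real (q0 + 4) - 2) < \<epsilon>"
    using \<open>\<epsilon> > 0\<close> by (simp add: divide_less_eq algebra_simps)
  then show "\<forall>\<^sub>F n in sequentially. dist (real (hitting_time \<omega> n) / real n) 2 < \<epsilon>"
    using eventually_hitting_time_ratio_near_2[of "q0 + 4", OF _ assms]
    by (auto simp: dist_real_def elim: eventually_mono)
qed

lemma depends_on_prefix_hitting_time: "depends_on_prefix h (\<lambda>\<omega>. P (hitting_time \<omega> h))"
proof -
  have "hitting_time \<omega> h = hitting_time \<omega>' h" if "\<forall>i<h. \<omega> i = \<omega>' i" for \<omega> \<omega>'
  proof -
    have "walk \<omega> h k = walk \<omega>' h k" for k
      using that by (intro walk_cong_prefix) auto
    then show ?thesis unfolding hitting_time_def by simp
  qed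
  then show ?thesis unfolding depends_on_prefix_def by metis
qed

lemma measurable_hitting_time_ratio [measurable]:
  "(\<lambda>\<omega>. real (hitting_time \<omega> n) / real n) \<in> borel_measurable mu0"
proof -
  have "(\<lambda>\<omega>. hitting_time \<omega> n) \<in> measurable mu0 (count_space UNIV)"
    using sets_mu0_prefix_event[OF depends_on_prefix_hitting_time]
    by (subst measurable_count_space_eq2_countable) (auto simp: vimage_def Int_def)
  then show ?thesis by (rule measurable_compose) simp
qed

theorem theorem2p16:
  defines "A \<equiv> {\<omega> \<in> space mu0.
     (\<lambda>n. real (tau (xpow_mult n (Q0_elem \<omega>))) / real n) \<longlonglongrightarrow> 2}"
  shows "A \<in> sets mu0 \<and> emeasure mu0 A = 1"
proof -
  have A_eq: "A = {\<omega> \<in> space mu0. (\<lambda>n. real (hitting_time \<omega> n) / real n) \<longlonglongrightarrow> 2}"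
    unfolding A_def tau_xpow_Q0_elem ..
  have A_sets: "A \<in> sets mu0"
    unfolding A_eq by measurable
  have "AE \<omega> in mu0. \<forall>q. q \<ge> 4 \<longrightarrow> (\<forall>\<^sub>F k in sequentially. \<not> bad_stage q k \<omega>)"
    using AE_eventually_not_bad_stage by (simp add: AE_all_countable)
  then have "AE \<omega> in mu0. \<omega> \<in> A"
    by eventually_elim (simp add: A_eq hitting_time_ratio_tendsto_2)
  with A_sets show ?thesis
    using mu0.emeasure_eq_1_AE by blast
qed

end
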